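(* Let $\ell$ be an integer with $\ell\ge 6$. Then the integer program $$\text{minimize } x+2y+3z \quad\text{subject to}\quad x+y+z-s=\binom{\ell}{2}-\ell,\quad x\le \binom{s}{2},\quad x,y,z,s\in\mathbb{N}$$ has a unique optimal solution, namely $x=\binom{\ell}{2}$, $y=0$, $z=0$, $s=\ell$.
   Context: $\mathbb{N}$ denotes the set of non-negative integers, and $\binom{s}{2}=s(s-1)/2$. *)

theory Defs
  imports Main
begin

definition feasible :: "nat \<Rightarrow> nat \<times> nat \<times> nat \<times> nat \<Rightarrow> bool" where
  "feasible l p = (case p of (x, y, z, s) \<Rightarrow>
      int x + int y + int z - int s = int (l choose 2) - int l \<and> x \<le> s choose 2)"

definition objective :: "nat \<times> nat \<times> nat \<times> nat \<Rightarrow> nat" where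
  "objective p = (case p of (x, y, z, s) \<Rightarrow> x + 2 * y + 3 * z)"

definition optimal :: "nat \<Rightarrow> nat \<times> nat \<times> nat \<times> nat \<Rightarrow> bool" where
  "optimal l p = (feasible l p \<and> (\<forall>q. feasible l q \<longrightarrow> objective p \<le> objective q))"

end

theory Submission
  imports Defs
begin

text \<open>Since x + y + z = binom(l,2) - l + s, the objective exceeds binom(l,2) - l + s by y + 2z.
  For s > l this already beats binom(l,2); for s = l it equals binom(l,2) exactly when y = z = 0.
  For s < l the constraint x \<le> binom(s,2) forces y + z \<ge> binom(l,2) - binom(s,2) - (l - s),
  and the gap binom(l,2) - binom(s,2) = (l - s)(l + s - 1)/2 exceeds 2(l - s) once l \<ge> 6.\<close>

lemma two_mult_choose_two: "2 * (n choose 2) = n * (n - 1)"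
proof -
  have "even (n * (n - 1))" by (cases "even n") auto
  then show ?thesis by (simp add: choose_two)
qed

lemma choose_two_gap:
  fixes s l :: nat
  assumes "s < l" and "6 \<le> l"
  shows "(s choose 2) + 2 * (l - s) < l choose 2"
proof -
  obtain d where l: "l = s + Suc d" using assms(1) less_iff_Suc_add by auto
  have "4 < 2 * s + d" using assms(2) l by simp
  then have "4 * Suc d < Suc d * (2 * s + d)"
    by (subst mult.commute) (rule mult_strict_right_mono, simp_all)
  moreover have "l * (l - 1) = s * (s - 1) + Suc d * (2 * s + d)"
    unfolding l by (cases s) (auto simp: algebra_simps)
  ultimately show ?thesis
    using two_mult_choose_two[of s] two_mult_choose_two[of l] l by simp
qed

lemma feasible_iff:
  "feasible l (x, y, z, s) \<longleftrightarrow> x + y + z + l = (l choose 2) + s \<and> x \<le> s choose 2"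
  unfolding feasible_def by auto

lemma feasible_optimum: "feasible l (l choose 2, 0, 0, l)"
  by (simp add: feasible_iff)

lemma objective_gt_of_feasible:
  assumes "6 \<le> l" and "feasible l p" and "p \<noteq> (l choose 2, 0, 0, l)"
  shows "l choose 2 < objective p"
proof -
  obtain x y z s where p: "p = (x, y, z, s)" by (cases p) auto
  have sum: "x + y + z + l = (l choose 2) + s" and x: "x \<le> s choose 2"
    using assms(2) by (auto simp: p feasible_iff)
  have obj: "objective p = x + 2 * y + 3 * z" by (simp add: p objective_def)
  consider "l < s" | "s = l" | "s < l" by linarith
  then show ?thesis
  proof cases
    case 1
    then show ?thesis using sum obj by linarith
  next
    case 2
    then have "y \<noteq> 0 \<or> z \<noteq> 0" using sum assms(3) p by auto
    then show ?thesis using sum obj 2 by linarith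
  next
    case 3
    then show ?thesis using choose_two_gap[OF 3 assms(1)] sum x obj by linarith
  qed
qed

theorem lemma6:
  fixes l :: nat
  assumes "l \<ge> 6"
  shows "{p. optimal l p} = {(l choose 2, 0, 0, l)}"
proof -
  let ?opt = "(l choose 2, 0, 0, l)"
  have objective_opt: "objective ?opt = l choose 2"
    by (simp add: objective_def)
  have "optimal l ?opt"
    unfolding optimal_def using feasible_optimum objective_gt_of_feasible[OF assms]
    by (metis objective_opt order.order_iff_strict)
  moreover have "p = ?opt" if "optimal l p" for p
    using that feasible_optimum objective_gt_of_feasible[OF assms] objective_opt
    unfolding optimal_def by (metis not_le)
  ultimately show ?thesis by blast
qed

end
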